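(* Let $f$ be a transcendental entire function with a bounded invariant Siegel disk $\Delta$ of rotation number $\theta$, and suppose $S(f)\cap\hat{\Delta}=\emptyset$. If furthermore $f$ satisfies the Separation Property and has no wandering domains, then $\Delta$ has no hidden components.
   Context: $S(f)$ is the set of singular values of $f$ (points $s$ such that for no neighborhood of $s$ are all branches of $f^{-1}$ well defined and univalent). An invariant Siegel disk is a Fatou component $\Delta$ with $f(\Delta)=\Delta$ on which $f$ is conformally conjugate to an irrational rotation $z\mapsto e^{2\pi i\theta}z$. $\hat{\Delta}$ is the complement of the unique unbounded component of $\mathbb{C}\setminus\overline{\Delta}$. The hidden components of $\Delta$ are the bounded components of $\mathbb{C}\setminus\overline{\Delta}$. A wandering domain is a Fatou component $U$ with $f^n(U)\ne f^m(U)$ for all $n\ne m$. $f$ satisfies the Separation Property if the closures of any two distinct periodic Fatou components of $f$ intersect in at most one point. *)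

theory Defs
  imports "HOL-Complex_Analysis.Complex_Analysis"
begin

definition transcendental_entire :: "(complex \<Rightarrow> complex) \<Rightarrow> bool" where
  "transcendental_entire f \<longleftrightarrow> f holomorphic_on UNIV \<and> \<not> (\<exists>p. \<forall>z. f z = poly p z)"

definition normal_family :: "(complex \<Rightarrow> complex) set \<Rightarrow> complex set \<Rightarrow> bool" where
  "normal_family F U \<longleftrightarrow>
     (\<forall>g :: nat \<Rightarrow> complex \<Rightarrow> complex. (\<forall>n. g n \<in> F) \<longrightarrow>
        (\<exists>r. strict_mono r \<and>
           ((\<exists>h. \<forall>K. compact K \<and> K \<subseteq> U \<longrightarrow> uniform_limit K (\<lambda>n. g (r n)) h sequentially)
            \<or> (\<forall>K. compact K \<and> K \<subseteq> U \<longrightarrow>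
                 (\<forall>B. eventually (\<lambda>n. \<forall>z\<in>K. B \<le> norm (g (r n) z)) sequentially)))))"

definition fatou_set :: "(complex \<Rightarrow> complex) \<Rightarrow> complex set" where
  "fatou_set f = {z. \<exists>U. open U \<and> z \<in> U \<and> normal_family (range (\<lambda>n. f ^^ n)) U}"

definition fatou_component :: "(complex \<Rightarrow> complex) \<Rightarrow> complex set \<Rightarrow> bool" where
  "fatou_component f U \<longleftrightarrow> U \<in> components (fatou_set f)"

text \<open>Singular values: s is not singular iff some open neighbourhood V of s is such that
  every branch of the inverse is well defined and univalent on V, i.e. f maps each
  connected component of the preimage of V bijectively onto V.\<close>
definition singular_values :: "(complex \<Rightarrow> complex) \<Rightarrow> complex set" where
  "singular_values f = {s. \<not> (\<exists>V. open V \<and> s \<in> V \<and>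
      (\<forall>W \<in> components (f -` V). inj_on f W \<and> f ` W = V))}"

definition invariant_siegel_disk :: "(complex \<Rightarrow> complex) \<Rightarrow> complex set \<Rightarrow> real \<Rightarrow> bool" where
  "invariant_siegel_disk f D \<theta> \<longleftrightarrow> fatou_component f D \<and> f ` D = D \<and> \<theta> \<notin> \<rat> \<and>
     (\<exists>\<phi>. \<phi> holomorphic_on D \<and> inj_on \<phi> D \<and> \<phi> ` D = ball 0 1 \<and>
        (\<forall>z\<in>D. \<phi> (f z) = exp (2 * pi * \<i> * complex_of_real \<theta>) * \<phi> z))"

definition filled :: "complex set \<Rightarrow> complex set" where
  "filled D = - \<Union>{C \<in> components (- closure D). \<not> bounded C}"

definition hidden_components :: "complex set \<Rightarrow> complex set set" where
  "hidden_components D = {C \<in> components (- closure D). bounded C}"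

definition wandering_domain :: "(complex \<Rightarrow> complex) \<Rightarrow> complex set \<Rightarrow> bool" where
  "wandering_domain f U \<longleftrightarrow> fatou_component f U \<and>
     (\<forall>n m. n \<noteq> m \<longrightarrow>
        \<not> (\<exists>V. fatou_component f V \<and> (f ^^ n) ` U \<subseteq> V \<and> (f ^^ m) ` U \<subseteq> V))"

definition periodic_fatou_component :: "(complex \<Rightarrow> complex) \<Rightarrow> complex set \<Rightarrow> bool" where
  "periodic_fatou_component f U \<longleftrightarrow> fatou_component f U \<and> (\<exists>p>0. (f ^^ p) ` U \<subseteq> U)"

definition separation_property :: "(complex \<Rightarrow> complex) \<Rightarrow> bool" where
  "separation_property f \<longleftrightarrow>
     (\<forall>U V. periodic_fatou_component f U \<and> periodic_fatou_component f V \<and> U \<noteq> V \<longrightarrow>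
        (\<forall>x y. x \<in> closure U \<inter> closure V \<and> y \<in> closure U \<inter> closure V \<longrightarrow> x = y))"

end

theory Submission
  imports Defs
begin

text \<open>
  Let \<open>U\<close> be a hidden component of \<open>\<Delta>\<close>. Its boundary lies in \<open>closure \<Delta>\<close>, which is compact and
  forward invariant, so by the maximum modulus principle all iterates are uniformly bounded on
  \<open>U\<close> and on every image \<open>f\<^bsup>k\<^esup>(U)\<close>; these images therefore lie in the Fatou set, and their
  boundaries again lie in \<open>closure \<Delta>\<close>.

  If some \<open>f\<^bsup>k\<^esup>(U)\<close> met \<open>closure \<Delta>\<close> it would lie in \<open>\<Delta>\<close>. For the first such \<open>k\<close>, the domain
  \<open>V = f\<^bsup>k-1\<^esup>(U)\<close> lies outside \<open>closure \<Delta>\<close> but is mapped into \<open>\<Delta> = f(\<Delta>)\<close>. As there are no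
  singular values in the filled disk, \<open>f\<close> is a covering over a simply connected neighbourhood
  of \<open>closure \<Delta>\<close>, hence injective on the connected set \<open>closure V \<union> closure \<Delta>\<close>, which is absurd.

  So every \<open>f\<^bsup>k\<^esup>(U)\<close> is a Fatou component disjoint from \<open>\<Delta>\<close>. Without wandering domains one of
  them is periodic; its boundary has at least two points and lies in \<open>closure \<Delta>\<close>, contradicting
  the Separation Property.
\<close>

section \<open>Plane topology\<close>

lemma two_points_in_frontier:
  fixes V :: "'a::euclidean_space set"
  assumes "open V" "bounded V" "V \<noteq> {}" "2 \<le> DIM('a)"
  obtains x y where "x \<in> frontier V" "y \<in> frontier V" "x \<noteq> y"
proof -
  have "V \<noteq> UNIV" using assms(2) not_bounded_UNIV by blast
  then obtain a where a: "a \<in> frontier V"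
    using assms(3) frontier_eq_empty by blast
  have "- {a} \<inter> V \<noteq> {}"
    using a assms(1,3) by (auto simp: frontier_def interior_open)
  moreover have "- {a} - V \<noteq> {}"
  proof
    assume "- {a} - V = {}"
    then have "bounded (- {a})" using assms(2) bounded_subset by blast
    then show False using cobounded_imp_unbounded[of "- {a}"] by simp
  qed
  ultimately have "- {a} \<inter> frontier V \<noteq> {}"
    using connected_Int_frontier[of "- {a}" V] connected_punctured_universe[of a] assms(4) by blast
  then show ?thesis using a that by blast
qed

lemma frontier_image_subset_image_frontier:
  fixes g :: "'a::heine_borel \<Rightarrow> 'b::t2_space"
  assumes "continuous_on (closure U) g" "bounded U" "open (g ` U)"
  shows "frontier (g ` U) \<subseteq> g ` frontier U"
proof
  fix x assume x: "x \<in> frontier (g ` U)"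
  have "compact (g ` closure U)"
    using assms(1,2) compact_closure compact_continuous_image by blast
  then have "closure (g ` U) \<subseteq> g ` closure U"
    by (simp add: closure_minimal closure_subset compact_imp_closed image_mono)
  moreover have "x \<in> closure (g ` U)" "x \<notin> g ` U"
    using x assms(3) by (auto simp: frontier_def interior_open)
  ultimately obtain y where "y \<in> closure U" "y \<notin> U" "x = g y" by auto
  then show "x \<in> g ` frontier U"
    using interior_subset by (fastforce simp: frontier_def)
qed

lemma in_components_if_frontier_subset_closure:
  fixes F :: "'a::real_normed_vector set"
  assumes F: "open F" "D \<in> components F"
    and X: "connected X" "X \<noteq> {}" "X \<subseteq> F" "X \<inter> closure D = {}" "frontier X \<subseteq> closure D"
  shows "X \<in> components F"
proof -
  obtain C where C: "C \<in> components F" "X \<subseteq> C"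
    using X exists_component_superset by (metis subset_empty)
  have "C \<noteq> D" using C(2) X(2,4) closure_subset by blast
  then have "C \<inter> D = {}" using C(1) F(2) components_nonoverlap by blast
  moreover have "C \<inter> frontier D = {}"
    using in_components_subset[OF C(1)] frontier_of_components_subset[OF F(2)] F(1)
    by (auto simp: frontier_def interior_open)
  ultimately have "C \<inter> frontier X = {}"
    using X(5) closure_Un_frontier[of D] by blast
  then have "C - X = {}"
    using connected_Int_frontier[of C X] in_components_connected[OF C(1)] C(2) X(2) by blast
  then show ?thesis using C by (metis Diff_eq_empty_iff subset_antisym)
qed

lemma Union_balls_subset_ball:
  fixes A :: "'a::real_normed_vector set"
  assumes "A \<subseteq> ball 0 R"
  shows "(\<Union>a\<in>A. ball a d) \<subseteq> ball 0 (R + d)"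
proof
  fix z assume "z \<in> (\<Union>a\<in>A. ball a d)"
  then obtain a where "a \<in> A" "dist a z < d" by auto
  then show "z \<in> ball 0 (R + d)"
    using assms dist_triangle[of 0 z a] by (fastforce simp: dist_commute)
qed

lemma connected_component_Compl_thickening:
  fixes g :: "real \<Rightarrow> 'a::euclidean_space"
  assumes g: "path g" and sep: "\<And>x a. x \<in> path_image g \<Longrightarrow> a \<in> A \<Longrightarrow> e \<le> dist x a"
    and y: "dist y (pathstart g) < e/2" and d: "d \<le> e/2"
  shows "connected_component (- (\<Union>a\<in>A. ball a d)) (pathfinish g) y"
proof -
  let ?s = "pathstart g"
  have "closed_segment y ?s \<union> path_image g \<subseteq> - (\<Union>a\<in>A. ball a d)"
  proof (intro subsetI ComplI)
    fix z assume z: "z \<in> closed_segment y ?s \<union> path_image g" and "z \<in> (\<Union>a\<in>A. ball a d)"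
    then obtain a where a: "a \<in> A" "dist a z < d" by auto
    show False
    proof (cases "z \<in> path_image g")
      case True
      then show False using sep[OF True a(1)] a(2) d zero_le_dist[of a z] by (simp add: dist_commute)
    next
      case False
      then have "dist z ?s < e/2"
        using z y dist_in_closed_segment[of z y ?s] by (auto simp: dist_commute)
      moreover have "e \<le> dist ?s a" using sep[OF _ a(1)] pathstart_in_path_image by blast
      ultimately show False using a(2) d dist_triangle[of ?s a z] by (simp add: dist_commute)
    qed
  qed
  moreover have "connected (closed_segment y ?s \<union> path_image g)"
    using g by (intro connected_Un) (auto simp: connected_path_image)
  ultimately show ?thesis
    using pathfinish_in_path_image[of g] by (auto simp: connected_component_def)
qed

lemma outside_thickening_near:
  fixes A :: "'a::euclidean_space set"
  assumes "compact A" "s \<in> outside A"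
  shows "\<exists>\<rho>>0. \<forall>d. 0 < d \<longrightarrow> d \<le> \<rho> \<longrightarrow> ball s \<rho> \<subseteq> outside (\<Union>a\<in>A. ball a d)"
proof -
  obtain R where R: "A \<subseteq> ball 0 R"
    using assms(1) compact_imp_bounded bounded_subset_ballD by blast
  obtain t where t: "connected_component (- A) s t" "R + 1 \<le> norm t"
    using assms(2) by (auto simp: outside_connected_component_le)
  have "open (- A)" using assms(1) compact_imp_closed by blast
  then have "path_component (- A) s t" using t(1) by (simp add: open_path_connected_component)
  then obtain g where g: "path g" "path_image g \<subseteq> - A" "pathstart g = s" "pathfinish g = t"
    unfolding path_component_def by blast
  obtain e where e: "e > 0" "\<And>x a. x \<in> path_image g \<Longrightarrow> a \<in> A \<Longrightarrow> e \<le> dist x a"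
    using separate_compact_closed[of "path_image g" A] g(1,2) compact_path_image
      assms(1) compact_imp_closed by blast
  text \<open>The bound \<open>d \<le> 1\<close> keeps the thickening inside the ball that \<open>t\<close> lies outside of.\<close>
  show ?thesis
  proof (intro exI[of _ "min (e/2) 1"] conjI allI impI subsetI)
    show "min (e/2) 1 > 0" using e(1) by simp
    fix d y assume d: "0 < d" "d \<le> min (e/2) 1" and y: "y \<in> ball s (min (e/2) 1)"
    let ?N = "\<Union>a\<in>A. ball a d"
    have "?N \<subseteq> ball 0 (R + 1)"
      using Union_balls_subset_ball[OF R, of d] d by auto
    then have "- ball 0 (R + 1) \<subseteq> outside ?N"
      using outside_subset_convex[OF convex_ball] by blast
    moreover have "t \<notin> ball 0 (R + 1)" using t(2) by simp
    ultimately have "t \<in> outside ?N" by blast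
    moreover have "connected_component (- ?N) t y"
      using connected_component_Compl_thickening[OF g(1) e(2), where y=y and d=d] g(3,4) y d
      by (simp add: dist_commute)
    ultimately show "y \<in> outside ?N" using outside_same_component by blast
  qed
qed

lemma compact_uniform_radius:
  fixes Q :: "'a::metric_space set"
  assumes "compact Q"
    and "\<And>s. s \<in> Q \<Longrightarrow> \<exists>\<rho>>0. \<forall>d. 0 < d \<longrightarrow> d \<le> \<rho> \<longrightarrow> ball s \<rho> \<subseteq> G d"
  shows "\<exists>\<delta>>0. \<forall>d. 0 < d \<longrightarrow> d \<le> \<delta> \<longrightarrow> Q \<subseteq> G d"
proof -
  obtain \<rho> where \<rho>: "\<And>s. s \<in> Q \<Longrightarrow> \<rho> s > 0"
    "\<And>s d. s \<in> Q \<Longrightarrow> 0 < d \<Longrightarrow> d \<le> \<rho> s \<Longrightarrow> ball s (\<rho> s) \<subseteq> G d"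
    using assms(2) by metis
  obtain C where C: "C \<subseteq> Q" "finite C" "Q \<subseteq> (\<Union>c\<in>C. ball c (\<rho> c))"
  proof (rule compactE_image[OF assms(1)])
    show "Q \<subseteq> (\<Union>c\<in>Q. ball c (\<rho> c))" using \<rho>(1) by force
  qed (use that in auto)
  define \<delta> where "\<delta> = Min (insert 1 (\<rho> ` C))"
  have "\<delta> > 0" and \<delta>_le: "\<And>c. c \<in> C \<Longrightarrow> \<delta> \<le> \<rho> c"
    unfolding \<delta>_def using C \<rho>(1) by auto
  have "Q \<subseteq> G d" if "0 < d" "d \<le> \<delta>" for d
  proof
    fix s assume "s \<in> Q"
    then obtain c where "c \<in> C" "s \<in> ball c (\<rho> c)" using C(3) by blast
    then show "s \<in> G d" using \<rho>(2)[of c d] C(1) that \<delta>_le[of c] by fastforce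
  qed
  then show ?thesis using \<open>\<delta> > 0\<close> by (intro exI[of _ \<delta>]) blast
qed

lemma closed_subset_outside_thickening:
  fixes A S :: "'a::euclidean_space set"
  assumes "compact A" "closed S" "S \<subseteq> outside A"
  obtains d where "d > 0" "S \<subseteq> outside (\<Union>a\<in>A. ball a d)"
proof -
  obtain R where R: "A \<subseteq> ball 0 R"
    using assms(1) compact_imp_bounded bounded_subset_ballD by blast
  define Q where "Q = S \<inter> cball 0 (R + 1)"
  have "compact Q" unfolding Q_def using assms(2) by (simp add: closed_Int_compact)
  have near: "\<exists>\<rho>>0. \<forall>d. 0 < d \<longrightarrow> d \<le> \<rho> \<longrightarrow> ball s \<rho> \<subseteq> outside (\<Union>a\<in>A. ball a d)"
    if "s \<in> Q" for s
  proof -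
    have "s \<in> outside A" using that assms(3) unfolding Q_def by blast
    then show ?thesis by (rule outside_thickening_near[OF assms(1)])
  qed
  obtain \<delta> where \<delta>: "\<delta> > 0" "\<forall>d. 0 < d \<longrightarrow> d \<le> \<delta> \<longrightarrow> Q \<subseteq> outside (\<Union>a\<in>A. ball a d)"
    using compact_uniform_radius[OF \<open>compact Q\<close> near] by blast
  define d where "d = min \<delta> 1"
  have d: "0 < d" "Q \<subseteq> outside (\<Union>a\<in>A. ball a d)" using \<delta> unfolding d_def by auto
  have "(\<Union>a\<in>A. ball a d) \<subseteq> ball 0 (R + 1)"
    using Union_balls_subset_ball[OF R, of d] unfolding d_def by auto
  then have "- ball 0 (R + 1) \<subseteq> outside (\<Union>a\<in>A. ball a d)"
    using outside_subset_convex[OF convex_ball] by blast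
  moreover have "S - Q \<subseteq> - ball 0 (R + 1)" unfolding Q_def by auto
  ultimately have "S \<subseteq> outside (\<Union>a\<in>A. ball a d)" using d(2) by blast
  then show ?thesis using d(1) that by blast
qed

lemma closure_bounded_component_Compl:
  fixes K :: "'a::euclidean_space set"
  assumes "closed K" "D \<in> components (- K)" "bounded D"
  shows "closure D \<subseteq> D \<union> K" and "closure D \<inter> K \<noteq> {}"
proof -
  have frontier: "frontier D \<subseteq> K"
    using frontier_of_components_closed_complement[OF assms(1,2)] .
  then show "closure D \<subseteq> D \<union> K" using closure_Un_frontier[of D] by blast
  have "D \<noteq> UNIV" using assms(3) not_bounded_UNIV by metis
  moreover have "D \<noteq> {}" using in_components_nonempty[OF assms(2)] .
  ultimately have "frontier D \<noteq> {}" using frontier_eq_empty by blast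
  then show "closure D \<inter> K \<noteq> {}" using frontier closure_Un_frontier[of D] by blast
qed

lemma simply_connected_component_Compl:
  fixes K :: "complex set"
  assumes K: "closed K" "connected K" "\<not> bounded K"
  shows "simply_connected (connected_component_set (- K) x)"
proof -
  let ?O = "connected_component_set (- K) x"
  have "open ?O" using K(1) open_connected_component by blast
  have OK: "?O \<inter> K = {}" using connected_component_subset by blast
  have "\<not> bounded C" if C: "C \<in> components (- ?O)" for C
  proof -
    have K_C: "K \<subseteq> C" if "C \<inter> K \<noteq> {}"
      using components_maximal[OF C K(2)] OK that by blast
    obtain z where z: "z \<in> C" using C in_components_nonempty by blast
    have "K \<subseteq> C \<or> (\<exists>D. D \<subseteq> C \<and> \<not> bounded D)"
    proof (cases "z \<in> K")
      case True
      then show ?thesis using K_C z by blast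
    next
      case False
      define D where "D = connected_component_set (- K) z"
      have D: "D \<in> components (- K)" "z \<in> D" unfolding D_def using False by (auto intro: componentsI)
      have "z \<notin> ?O" using z in_components_subset[OF C] by blast
      then have "D \<inter> ?O = {}" unfolding D_def by (simp add: connected_component_disjoint)
      show ?thesis
      proof (cases "bounded D")
        case True
        have "closure D \<subseteq> - ?O"
          using closure_bounded_component_Compl(1)[OF K(1) D(1) True] \<open>D \<inter> ?O = {}\<close> OK by blast
        then have "closure D \<subseteq> C"
          using components_maximal[OF C connected_imp_connected_closure[OF in_components_connected[OF D(1)]]]
            z D(2) closure_subset by blast
        then show ?thesis using K_C closure_bounded_component_Compl(2)[OF K(1) D(1) True] by blast
      next
        case False
        have "D \<subseteq> C"
          using components_maximal[OF C in_components_connected[OF D(1)]] \<open>D \<inter> ?O = {}\<close> z D(2)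
          by blast
        then show ?thesis using False by blast
      qed
    qed
    then show ?thesis using K(3) bounded_subset by blast
  qed
  then show ?thesis
    using simply_connected_eq_unbounded_complement_components[OF \<open>open ?O\<close>] by simp
qed

lemma simply_connected_neighbourhood_avoiding:
  fixes A S :: "complex set"
  assumes A: "compact A" "connected A" and S: "closed S" "S \<subseteq> outside A"
  obtains W where "open W" "simply_connected W" "A \<subseteq> W" "W \<inter> S = {}"
proof (cases "A = {}")
  case True
  then show ?thesis using that[of "{}"] by simp
next
  case False
  then obtain a where a: "a \<in> A" by blast
  obtain d where d: "d > 0" "S \<subseteq> outside (\<Union>a\<in>A. ball a d)"
    using closed_subset_outside_thickening[OF A(1) S] .
  define N where "N = (\<Union>a\<in>A. ball a d)"
  obtain R where "A \<subseteq> ball 0 R"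
    using A(1) compact_imp_bounded bounded_subset_ballD by blast
  then have "bounded N"
    unfolding N_def using Union_balls_subset_ball bounded_subset[OF bounded_ball] by metis
  then have K: "connected (outside N)" "\<not> bounded (outside N)" "outside N \<noteq> {}"
    using connected_outside[of N] unbounded_outside outside_bounded_nonempty by auto
  have "open N" unfolding N_def by blast
  then have "closed (outside N)"
    using K outside_in_components closed_components[of "- N"] by blast
  have "A \<subseteq> N" unfolding N_def using d(1) by force
  define W where "W = connected_component_set (- outside N) a"
  show ?thesis
  proof
    show "open W" unfolding W_def using \<open>closed (outside N)\<close> open_connected_component by blast
    show "simply_connected W"
      unfolding W_def using simply_connected_component_Compl \<open>closed (outside N)\<close> K by blast
    have "A \<subseteq> - outside N" using \<open>A \<subseteq> N\<close> outside_no_overlap by blast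
    then show "A \<subseteq> W" unfolding W_def using a A(2) connected_component_maximal by blast
    show "W \<inter> S = {}"
      unfolding W_def using d(2) connected_component_subset N_def by blast
  qed
qed

lemma filled_eq_Compl_outside:
  assumes "bounded D"
  shows "filled D = - outside (closure D)"
proof -
  have "{C \<in> components (- closure D). \<not> bounded C} = {outside (closure D)}"
    using bounded_unique_outside[of "closure D"] assms by auto
  then show ?thesis unfolding filled_def by simp
qed

section \<open>Entire functions as coverings away from singular values\<close>

lemma closed_singular_values: "closed (singular_values f)"
proof -
  have "- singular_values f =
      \<Union>{V. open V \<and> (\<forall>W \<in> components (f -` V). inj_on f W \<and> f ` W = V)}"
    unfolding singular_values_def by blast
  then show ?thesis unfolding closed_def by auto
qed

lemma entire_vimage_open_nonempty:
  fixes f :: "complex \<Rightarrow> complex"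
  assumes f: "f holomorphic_on UNIV" "\<not> f constant_on UNIV" and V: "open V" "s \<in> V"
  shows "f -` V \<noteq> {}"
proof
  assume empty: "f -` V = {}"
  have "V \<noteq> {s}" using V(1) not_open_singleton by metis
  then obtain s' where "s' \<in> V" "s' \<noteq> s" using V(2) by blast
  then obtain c where "f = (\<lambda>x. c)"
    using little_Picard[OF f(1), of s s'] empty V(2) by blast
  then show False using f(2) by (simp add: constant_on_def)
qed

lemma homeomorphism_sheet:
  fixes f :: "complex \<Rightarrow> complex"
  assumes f: "f holomorphic_on UNIV" "\<not> f constant_on UNIV"
    and W: "open W" "inj_on f W" and T: "open T" "T \<subseteq> f ` W"
  obtains q where "homeomorphism (W \<inter> f -` T) T f q"
proof (rule homeomorphism_injective_open_map)
  have contf: "continuous_on UNIV f" using f(1) holomorphic_on_imp_continuous_on by blast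
  then show "continuous_on (W \<inter> f -` T) f" using continuous_on_subset by blast
  show "f ` (W \<inter> f -` T) = T" using T(2) by blast
  show "inj_on f (W \<inter> f -` T)" using W(2) inj_on_subset by blast
  fix U assume U: "openin (top_of_set (W \<inter> f -` T)) U"
  have "open (W \<inter> f -` T)" using W(1) T(1) contf by (simp add: open_Int open_vimage)
  then have "open U" using U openin_open_trans by blast
  then have "open (f ` U)" using open_mapping_thm[OF f(1) open_UNIV connected_UNIV _ _ f(2)] by blast
  moreover have "f ` U \<subseteq> T" using openin_imp_subset[OF U] by blast
  ultimately show "openin (top_of_set T) (f ` U)" by (simp add: open_subset)
qed (use that in blast)

lemma nonsingular_value_in_range:
  fixes f :: "complex \<Rightarrow> complex"
  assumes f: "f holomorphic_on UNIV" "\<not> f constant_on UNIV" and s: "s \<notin> singular_values f"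
  shows "s \<in> range f"
proof -
  obtain V where V: "open V" "s \<in> V" "\<And>W. W \<in> components (f -` V) \<Longrightarrow> f ` W = V"
    using s unfolding singular_values_def by blast
  obtain z where "z \<in> f -` V" using entire_vimage_open_nonempty[OF f V(1,2)] by blast
  then have "connected_component_set (f -` V) z \<in> components (f -` V)" by (rule componentsI)
  then show ?thesis using V by blast
qed

lemma pairwise_disjnt_components_Int: "pairwise disjnt ((\<lambda>W. W \<inter> X) ` components S)"
proof (unfold pairwise_def, intro ballI impI)
  fix u1 u2 assume u: "u1 \<in> (\<lambda>W. W \<inter> X) ` components S" "u2 \<in> (\<lambda>W. W \<inter> X) ` components S"
    "u1 \<noteq> u2"
  then obtain W1 W2 where W: "W1 \<in> components S" "u1 = W1 \<inter> X" "W2 \<in> components S" "u2 = W2 \<inter> X"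
    by blast
  then have "W1 \<inter> W2 = {}" using u(3) components_nonoverlap[OF W(1,3)] by blast
  then show "disjnt u1 u2" using W(2,4) by (auto simp: disjnt_def)
qed

lemma covering_space_nonsingular:
  fixes f :: "complex \<Rightarrow> complex"
  assumes f: "f holomorphic_on UNIV" "\<not> f constant_on UNIV"
    and \<Omega>: "open \<Omega>" "\<Omega> \<inter> singular_values f = {}"
  shows "covering_space (f -` \<Omega>) f \<Omega>"
proof
  have contf: "continuous_on UNIV f" using f(1) holomorphic_on_imp_continuous_on by blast
  then show "continuous_on (f -` \<Omega>) f" using continuous_on_subset by blast
  show "f ` (f -` \<Omega>) = \<Omega>" using nonsingular_value_in_range[OF f] \<Omega>(2) by blast
  fix s assume s: "s \<in> \<Omega>"
  then have "s \<notin> singular_values f" using \<Omega>(2) by blast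
  then obtain V where V: "open V" "s \<in> V" "\<And>W. W \<in> components (f -` V) \<Longrightarrow> inj_on f W \<and> f ` W = V"
    unfolding singular_values_def by blast
  define T where "T = V \<inter> \<Omega>"
  have "open T" unfolding T_def using V(1) \<Omega>(1) by blast
  have "open (f -` V)" using V(1) contf by (simp add: open_vimage)
  then have open_sheets: "open W" if "W \<in> components (f -` V)" for W
    using that open_components by blast
  define \<V> where "\<V> = (\<lambda>W. W \<inter> f -` T) ` components (f -` V)"
  have sheet_open: "openin (top_of_set (f -` \<Omega>)) u"
    and sheet_homeomorphic: "\<exists>q. homeomorphism u T f q" if u: "u \<in> \<V>" for u
  proof -
    obtain W where W: "W \<in> components (f -` V)" "u = W \<inter> f -` T"
      using u unfolding \<V>_def by blast
    have "open u" using W open_sheets \<open>open T\<close> contf by (simp add: open_Int open_vimage)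
    moreover have "u \<subseteq> f -` \<Omega>" using W(2) unfolding T_def by blast
    ultimately show "openin (top_of_set (f -` \<Omega>)) u" by (simp add: open_subset)
    have "T \<subseteq> f ` W" using V(3)[OF W(1)] unfolding T_def by blast
    then show "\<exists>q. homeomorphism u T f q"
      using homeomorphism_sheet[OF f open_sheets[OF W(1)] _ \<open>open T\<close>] V(3)[OF W(1)] W(2)
      by metis
  qed
  have "\<Union>\<V> = f -` \<Omega> \<inter> f -` T"
    unfolding \<V>_def T_def by (auto simp: Union_components[symmetric])
  moreover have "s \<in> T" unfolding T_def using s V(2) by blast
  moreover have "openin (top_of_set \<Omega>) T" using \<open>open T\<close> unfolding T_def by (simp add: open_subset)
  ultimately show "\<exists>T. s \<in> T \<and> openin (top_of_set \<Omega>) T \<and>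
          (\<exists>v. \<Union>v = f -` \<Omega> \<inter> f -` T \<and> (\<forall>u\<in>v. openin (top_of_set (f -` \<Omega>)) u) \<and>
               pairwise disjnt v \<and> (\<forall>u\<in>v. \<exists>q. homeomorphism u T f q))"
  proof (intro exI[of _ T] conjI exI[of _ \<V>] ballI)
  qed (use sheet_open sheet_homeomorphic pairwise_disjnt_components_Int in \<open>auto simp: \<V>_def\<close>)
qed

lemma inj_on_connected_nonsingular_vimage:
  fixes f :: "complex \<Rightarrow> complex"
  assumes f: "f holomorphic_on UNIV" "\<not> f constant_on UNIV"
    and \<Omega>: "open \<Omega>" "simply_connected \<Omega>" "\<Omega> \<inter> singular_values f = {}"
    and Y: "connected Y" "f ` Y \<subseteq> \<Omega>"
  shows "inj_on f Y"
proof (rule inj_onI)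
  fix p q assume pq: "p \<in> Y" "q \<in> Y" "f p = f q"
  have contf: "continuous_on UNIV f" using f(1) holomorphic_on_imp_continuous_on by blast
  let ?G = "f -` \<Omega>"
  have "open ?G" using \<Omega>(1) contf by (simp add: open_vimage)
  have "connected_component ?G p q" using Y pq(1,2) by (auto simp: connected_component_def)
  then have "path_component ?G p q" using \<open>open ?G\<close> by (simp add: open_path_connected_component)
  then obtain a where a: "path a" "path_image a \<subseteq> ?G" "pathstart a = p" "pathfinish a = q"
    unfolding path_component_def by blast
  have "path (f \<circ> a)" using a(1) contf by (auto intro: path_continuous_image continuous_on_subset)
  moreover have "path_image (f \<circ> a) \<subseteq> \<Omega>" using a(2) by (auto simp: path_image_compose)
  moreover have "pathfinish (f \<circ> a) = pathstart (f \<circ> a)"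
    using a(3,4) pq(3) by (simp add: pathfinish_compose pathstart_compose)
  ultimately have "homotopic_paths \<Omega> (f \<circ> a) (linepath (pathstart (f \<circ> a)) (pathstart (f \<circ> a)))"
    using \<Omega>(2) simply_connected_eq_contractible_path by blast
  then have hom: "homotopic_paths \<Omega> (f \<circ> a) (linepath (f p) (f p))"
    using a(3) by (simp add: pathstart_compose)
  have "p \<in> ?G" using a(2,3) pathstart_in_path_image by blast
  text \<open>The loop \<open>f \<circ> a\<close> is null-homotopic in \<open>\<Omega>\<close>, so its lift \<open>a\<close> ends where the constant lift
    from \<open>p\<close> ends.\<close>
  have "pathfinish a = pathfinish (linepath p p)"
  proof (rule covering_space_monodromy[OF covering_space_nonsingular[OF f \<Omega>(1,3)]
        \<open>path (f \<circ> a)\<close> \<open>path_image (f \<circ> a) \<subseteq> \<Omega>\<close> _ _ hom a(1,2)])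
    show "path (linepath (f p) (f p))" "path (linepath p p)" by simp_all
    show "path_image (linepath (f p) (f p)) \<subseteq> \<Omega>" "path_image (linepath p p) \<subseteq> ?G"
      using \<open>p \<in> ?G\<close> by simp_all
    show "\<And>t. f (a t) = (f \<circ> a) t" "\<And>t. f (linepath p p t) = linepath (f p) (f p) t"
      by (simp_all add: linepath_refl)
    show "pathstart a = pathstart (linepath p p)" using a(3) by simp
  qed
  then show "p = q" using a(4) by simp
qed

section \<open>Fatou components\<close>

lemma holomorphic_on_funpow:
  fixes f :: "complex \<Rightarrow> complex"
  assumes "f holomorphic_on UNIV"
  shows "(f ^^ n) holomorphic_on UNIV"
proof (induction n)
  case 0
  then show ?case by (simp add: id_def)
next
  case (Suc n)
  then show ?case
    using holomorphic_on_compose_gen[of "f ^^ n" UNIV f UNIV] assms by (simp add: o_def)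
qed

lemma open_fatou_set: "open (fatou_set f)"
proof -
  have "fatou_set f = \<Union>{U. open U \<and> normal_family (range (\<lambda>n. f ^^ n)) U}"
    unfolding fatou_set_def by blast
  then show ?thesis by auto
qed

lemma subset_fatou_set_if_iterates_bounded:
  fixes f :: "complex \<Rightarrow> complex"
  assumes f: "f holomorphic_on UNIV" and X: "open X"
    and B: "\<And>n z. z \<in> X \<Longrightarrow> norm ((f ^^ n) z) \<le> B"
  shows "X \<subseteq> fatou_set f"
proof -
  have "normal_family (range (\<lambda>n. f ^^ n)) X"
    unfolding normal_family_def
  proof (intro allI impI)
    fix g :: "nat \<Rightarrow> complex \<Rightarrow> complex"
    assume g: "\<forall>n. g n \<in> range (\<lambda>n. f ^^ n)"
    obtain h r where "strict_mono r"
      "\<And>K. compact K \<Longrightarrow> K \<subseteq> X \<Longrightarrow> uniform_limit K (g \<circ> r) h sequentially"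
    proof (rule Montel[OF X, of "range (\<lambda>n. f ^^ n)" g])
      show "\<And>h. h \<in> range (\<lambda>n. f ^^ n) \<Longrightarrow> h holomorphic_on X"
        using holomorphic_on_funpow[OF f] holomorphic_on_subset by blast
      show "\<And>K. compact K \<Longrightarrow> K \<subseteq> X \<Longrightarrow> \<exists>B. \<forall>h \<in> range (\<lambda>n. f ^^ n). \<forall>z\<in>K. norm (h z) \<le> B"
        using B by blast
      show "range g \<subseteq> range (\<lambda>n. f ^^ n)" using g by blast
    qed blast
    then show "\<exists>r. strict_mono r \<and>
           ((\<exists>h. \<forall>K. compact K \<and> K \<subseteq> X \<longrightarrow> uniform_limit K (\<lambda>n. g (r n)) h sequentially) \<or>
            (\<forall>K. compact K \<and> K \<subseteq> X \<longrightarrow>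
                 (\<forall>B. eventually (\<lambda>n. \<forall>z\<in>K. B \<le> norm (g (r n) z)) sequentially)))"
      unfolding o_def by blast
  qed
  then show ?thesis using X unfolding fatou_set_def by blast
qed

lemma periodic_image_if_not_wandering:
  assumes "\<not> wandering_domain f U" "\<And>k. fatou_component f ((f ^^ k) ` U)"
  obtains a where "periodic_fatou_component f ((f ^^ a) ` U)"
proof -
  have "fatou_component f U" using assms(2)[of 0] by simp
  then obtain n m V where nm: "n < m" "fatou_component f V" "(f ^^ n) ` U \<subseteq> V" "(f ^^ m) ` U \<subseteq> V"
    using assms(1) unfolding wandering_domain_def by (metis linorder_neqE_nat)
  have eq_V: "(f ^^ k) ` U = V" if "(f ^^ k) ` U \<subseteq> V" for k
  proof -
    have "(f ^^ k) ` U \<noteq> {}"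
      using assms(2)[of k] in_components_nonempty unfolding fatou_component_def by blast
    then show ?thesis
      using components_eq[of "(f ^^ k) ` U" "fatou_set f" V] assms(2)[of k] nm(2) that
      unfolding fatou_component_def by blast
  qed
  have "(f ^^ (m - n)) ` ((f ^^ n) ` U) = (f ^^ m) ` U"
    using nm(1) by (simp add: image_comp funpow_add[symmetric])
  also have "\<dots> = (f ^^ n) ` U" using eq_V[OF nm(3)] eq_V[OF nm(4)] by simp
  finally show ?thesis
    using that assms(2)[of n] nm(1) unfolding periodic_fatou_component_def
    by (metis order_refl zero_less_diff)
qed

lemma separation_property_frontier_not_subset:
  assumes "separation_property f" "periodic_fatou_component f U" "periodic_fatou_component f V"
    and "U \<noteq> V" "bounded V"
  shows "\<not> frontier V \<subseteq> closure U"
proof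
  assume frontier: "frontier V \<subseteq> closure U"
  have V: "V \<in> components (fatou_set f)"
    using assms(3) unfolding periodic_fatou_component_def fatou_component_def by blast
  obtain x y where "x \<in> frontier V" "y \<in> frontier V" "x \<noteq> y"
    using two_points_in_frontier[of V] open_components[OF open_fatou_set V]
      in_components_nonempty[OF V] assms(5) by auto
  then show False
    using assms(1-4) frontier closure_Un_frontier unfolding separation_property_def by blast
qed

locale invariant_fatou_component =
  fixes f :: "complex \<Rightarrow> complex" and \<Delta> :: "complex set"
  assumes entire: "f holomorphic_on UNIV"
    and component: "\<Delta> \<in> components (fatou_set f)"
    and invariant: "f ` \<Delta> = \<Delta>"
    and bounded: "bounded \<Delta>"
begin

lemma open_\<Delta>: "open \<Delta>"
  using open_components[OF open_fatou_set component] .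

lemma connected_closure_\<Delta>: "connected (closure \<Delta>)"
  using in_components_connected[OF component] connected_imp_connected_closure by blast

lemma compact_closure_\<Delta>: "compact (closure \<Delta>)"
  using bounded by (simp add: compact_closure)

lemma funpow_image_\<Delta>: "(f ^^ n) ` \<Delta> = \<Delta>"
proof (induction n)
  case (Suc n)
  have "(f ^^ Suc n) ` \<Delta> = f ` (f ^^ n) ` \<Delta>" by (simp add: image_image)
  then show ?case using Suc invariant by simp
qed simp

lemma continuous_on_funpow: "continuous_on S (f ^^ n)"
  using holomorphic_on_funpow[OF entire] holomorphic_on_imp_continuous_on continuous_on_subset
  by blast

lemma funpow_image_closure_\<Delta>: "(f ^^ n) ` closure \<Delta> \<subseteq> closure \<Delta>"
  using image_closure_subset[OF continuous_on_funpow] funpow_image_\<Delta> closure_subset by blast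

lemma image_closure_\<Delta>: "f ` closure \<Delta> \<subseteq> closure \<Delta>"
  using funpow_image_closure_\<Delta>[of 1] by simp

lemma funpow_nonconstant: "\<not> (f ^^ n) constant_on UNIV"
proof
  assume "(f ^^ n) constant_on UNIV"
  then obtain c where "\<Delta> \<subseteq> {c}" using funpow_image_\<Delta>[of n] by (force simp: constant_on_def)
  then have "\<Delta> = {c}" using in_components_nonempty[OF component] by blast
  then show False using open_\<Delta> not_open_singleton by metis
qed

lemma periodic_\<Delta>: "periodic_fatou_component f \<Delta>"
  unfolding periodic_fatou_component_def fatou_component_def
  using component invariant by (intro conjI exI[of _ 1]) auto

lemma subset_if_meets_closure:
  assumes "connected X" "X \<subseteq> fatou_set f" "X \<inter> closure \<Delta> \<noteq> {}"
  shows "X \<subseteq> \<Delta>"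
proof -
  have "frontier \<Delta> \<inter> fatou_set f = {}"
    using frontier_of_components_subset[OF component] open_fatou_set
    by (auto simp: frontier_def interior_open)
  then have "X \<inter> \<Delta> \<noteq> {}" using assms(2,3) closure_Un_frontier[of \<Delta>] by blast
  then show ?thesis using components_maximal[OF component assms(1,2)] by blast
qed

lemma adjacent_domain_image_not_subset:
  assumes nonsingular: "singular_values f \<inter> filled \<Delta> = {}"
    and V: "connected V" "bounded V" "open V" "V \<noteq> {}" "V \<inter> closure \<Delta> = {}"
      "frontier V \<subseteq> closure \<Delta>"
  shows "\<not> f ` V \<subseteq> \<Delta>"
proof
  assume into: "f ` V \<subseteq> \<Delta>"
  have "singular_values f \<subseteq> outside (closure \<Delta>)"
    using nonsingular filled_eq_Compl_outside[OF bounded] by blast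
  then obtain \<Omega> where \<Omega>: "open \<Omega>" "simply_connected \<Omega>" "closure \<Delta> \<subseteq> \<Omega>"
    "\<Omega> \<inter> singular_values f = {}"
    using simply_connected_neighbourhood_avoiding[OF compact_closure_\<Delta> connected_closure_\<Delta>
        closed_singular_values] by blast
  let ?Y = "closure V \<union> closure \<Delta>"
  have "frontier V \<noteq> {}" using V(2,4) frontier_eq_empty not_bounded_UNIV by blast
  then have "closure V \<inter> closure \<Delta> \<noteq> {}" using V(6) closure_Un_frontier by blast
  then have "connected ?Y"
    using V(1) connected_imp_connected_closure connected_closure_\<Delta> connected_Un by blast
  moreover have "f ` ?Y \<subseteq> \<Omega>"
  proof -
    have "f ` closure V \<subseteq> closure \<Delta>"
      using into V(6) closure_Un_frontier[of V] image_closure_\<Delta> closure_subset by blast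
    then show ?thesis using image_closure_\<Delta> \<Omega>(3) by blast
  qed
  ultimately have inj: "inj_on f ?Y"
    using inj_on_connected_nonsingular_vimage[OF entire _ \<Omega>(1,2,4)] funpow_nonconstant[of 1]
    by simp
  obtain x where x: "x \<in> V" using V(4) by blast
  then obtain q where q: "q \<in> \<Delta>" "f q = f x" using into invariant by (metis imageE image_subset_iff)
  have "x = q" using inj_onD[OF inj q(2)] x q(1) closure_subset by blast
  then show False using x q(1) V(5) closure_subset by blast
qed

end

locale hidden_component = invariant_fatou_component +
  fixes U :: "complex set"
  assumes hidden: "U \<in> hidden_components \<Delta>"
begin

lemma open_U: "open U" and connected_U: "connected U" and U_nonempty: "U \<noteq> {}"
  and bounded_U: "bounded U" and U_disjoint_closure: "U \<inter> closure \<Delta> = {}"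
  and frontier_U: "frontier U \<subseteq> closure \<Delta>"
proof -
  have U: "U \<in> components (- closure \<Delta>)" and "bounded U"
    using hidden unfolding hidden_components_def by auto
  then show "bounded U" by blast
  show "open U" using open_components[OF _ U] by blast
  show "connected U" using in_components_connected[OF U] .
  show "U \<noteq> {}" using in_components_nonempty[OF U] .
  show "U \<inter> closure \<Delta> = {}" using in_components_subset[OF U] by blast
  show "frontier U \<subseteq> closure \<Delta>"
    using frontier_of_components_closed_complement[OF closed_closure U] .
qed

lemma norm_iterate_le:
  assumes "\<And>x. x \<in> closure \<Delta> \<Longrightarrow> norm x \<le> R" and "z \<in> (f ^^ k) ` U"
  shows "norm ((f ^^ n) z) \<le> R"
proof -
  obtain u where u: "u \<in> U" "z = (f ^^ k) u" using assms(2) by blast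
  have "norm ((f ^^ (n + k)) u) \<le> R"
  proof (rule maximum_modulus_frontier[of "f ^^ (n + k)" U])
    show "(f ^^ (n + k)) holomorphic_on interior U"
      using holomorphic_on_funpow[OF entire] holomorphic_on_subset by blast
    show "\<And>z. z \<in> frontier U \<Longrightarrow> norm ((f ^^ (n + k)) z) \<le> R"
      using frontier_U funpow_image_closure_\<Delta> assms(1) by blast
  qed (use u bounded_U continuous_on_funpow in auto)
  then show ?thesis using u(2) by (simp add: funpow_add)
qed

lemma open_funpow_image: "open ((f ^^ k) ` U)"
  using open_mapping_thm[OF holomorphic_on_funpow[OF entire] open_UNIV connected_UNIV open_U
      subset_UNIV funpow_nonconstant] .

lemma connected_funpow_image: "connected ((f ^^ k) ` U)"
  using connected_continuous_image[OF continuous_on_funpow connected_U] .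

lemma funpow_image_nonempty: "(f ^^ k) ` U \<noteq> {}"
  using U_nonempty by blast

lemma bounded_funpow_image: "bounded ((f ^^ k) ` U)"
  and funpow_image_subset_fatou_set: "(f ^^ k) ` U \<subseteq> fatou_set f"
proof -
  obtain R where R: "\<And>x. x \<in> closure \<Delta> \<Longrightarrow> norm x \<le> R"
    using compact_imp_bounded[OF compact_closure_\<Delta>] unfolding bounded_iff by blast
  show "bounded ((f ^^ k) ` U)"
    using norm_iterate_le[OF R, of _ k 0] unfolding bounded_iff by auto
  show "(f ^^ k) ` U \<subseteq> fatou_set f"
    by (rule subset_fatou_set_if_iterates_bounded[OF entire open_funpow_image norm_iterate_le[OF R]])
qed

lemma frontier_funpow_image: "frontier ((f ^^ k) ` U) \<subseteq> closure \<Delta>"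
proof -
  have "frontier ((f ^^ k) ` U) \<subseteq> (f ^^ k) ` frontier U"
    by (rule frontier_image_subset_image_frontier[OF continuous_on_funpow bounded_U
          open_funpow_image])
  then show ?thesis using frontier_U funpow_image_closure_\<Delta> by blast
qed

lemma funpow_image_disjoint_closure:
  assumes "singular_values f \<inter> filled \<Delta> = {}"
  shows "(f ^^ k) ` U \<inter> closure \<Delta> = {}"
proof (rule ccontr)
  assume "(f ^^ k) ` U \<inter> closure \<Delta> \<noteq> {}"
  then have ex: "\<exists>k. (f ^^ k) ` U \<inter> closure \<Delta> \<noteq> {}" by blast
  define k0 where "k0 = (LEAST k. (f ^^ k) ` U \<inter> closure \<Delta> \<noteq> {})"
  have k0: "(f ^^ k0) ` U \<inter> closure \<Delta> \<noteq> {}" unfolding k0_def using LeastI_ex[OF ex] .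
  then have "k0 \<noteq> 0" using U_disjoint_closure by (intro notI) simp
  then obtain j where j: "k0 = Suc j" using not0_implies_Suc by blast
  have "(f ^^ j) ` U \<inter> closure \<Delta> = {}"
    using not_less_Least[of j "\<lambda>k. (f ^^ k) ` U \<inter> closure \<Delta> \<noteq> {}"] j unfolding k0_def by auto
  moreover have "f ` (f ^^ j) ` U \<subseteq> \<Delta>"
    using subset_if_meets_closure[OF connected_funpow_image funpow_image_subset_fatou_set k0] j
    by (simp add: image_comp)
  ultimately show False
    using adjacent_domain_image_not_subset[OF assms connected_funpow_image bounded_funpow_image
        open_funpow_image funpow_image_nonempty] frontier_funpow_image
    by blast
qed

lemma periodic_funpow_image:
  assumes "\<not> (\<exists>V. wandering_domain f V)" "\<And>k. (f ^^ k) ` U \<inter> closure \<Delta> = {}"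
  obtains a where "periodic_fatou_component f ((f ^^ a) ` U)"
proof -
  have "fatou_component f ((f ^^ k) ` U)" for k
    unfolding fatou_component_def
    using in_components_if_frontier_subset_closure[OF open_fatou_set component connected_funpow_image
        funpow_image_nonempty funpow_image_subset_fatou_set assms(2) frontier_funpow_image] .
  then show ?thesis using periodic_image_if_not_wandering[of f U] assms(1) that by blast
qed

end

theorem propositionA:
  fixes f :: "complex \<Rightarrow> complex" and \<Delta> :: "complex set" and \<theta> :: real
  assumes "transcendental_entire f"
    and "invariant_siegel_disk f \<Delta> \<theta>"
    and "bounded \<Delta>"
    and "singular_values f \<inter> filled \<Delta> = {}"
    and "separation_property f"
    and "\<not> (\<exists>U. wandering_domain f U)"
  shows "hidden_components \<Delta> = {}"
proof -
  interpret invariant_fatou_component f \<Delta>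
  proof unfold_locales
    show "f holomorphic_on UNIV" using assms(1) unfolding transcendental_entire_def by blast
    show "\<Delta> \<in> components (fatou_set f)" "f ` \<Delta> = \<Delta>"
      using assms(2) unfolding invariant_siegel_disk_def fatou_component_def by auto
  qed (rule assms(3))
  have "U \<notin> hidden_components \<Delta>" for U
  proof
    assume "U \<in> hidden_components \<Delta>"
    then interpret hidden_component f \<Delta> U
      using invariant_fatou_component_axioms
      by (simp add: hidden_component_def hidden_component_axioms_def)
    obtain a where a: "periodic_fatou_component f ((f ^^ a) ` U)"
      using periodic_funpow_image[OF assms(6) funpow_image_disjoint_closure[OF assms(4)]] .
    have "(f ^^ a) ` U \<noteq> \<Delta>"
      using funpow_image_disjoint_closure[OF assms(4), of a] funpow_image_nonempty[of a]
        closure_subset[of \<Delta>] by auto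
    then show False
      using separation_property_frontier_not_subset[OF assms(5) periodic_\<Delta> a]
        bounded_funpow_image frontier_funpow_image
      by blast
  qed
  then show ?thesis by blast
qed

end
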